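(* Let $V$ be a real vector space of finite even dimension with nondegenerate quadratic form $Q$, and let $\sigma$ be a real structure on $\mathbb{C}l(V)$. The following are equivalent: (1) $\sigma$ is admissible; (2) $V_\sigma$ is stable under $c$; (3) $V$ is stable under $\sigma$; (4) $\sigma$ restricts to a $Q$-orthogonal symmetry of $V$ (an involutive $Q$-orthogonal transformation of $V$); (5) the subspaces $V_+:=V\cap V_\sigma$ and $V_-:=V\cap iV_\sigma$ form a $Q$-orthogonal decomposition $V=V_+\oplus V_-$.
   Context: $Cl(V,Q)$ is the real Clifford algebra with $v^2=+Q(v)$, $\mathbb{C}l(V)=Cl(V,Q)\otimes\mathbb{C}$ with complex conjugation $c(a\otimes\lambda)=a\otimes\bar\lambda$, and $V^{\mathbb{C}}=V\otimes\mathbb{C}\subset\mathbb{C}l(V)$. A real structure is an involutive antilinear algebra automorphism of $\mathbb{C}l(V)$ stabilizing $V^{\mathbb{C}}$; it is admissible if it commutes with $c$. $V_\sigma=\{v\in V^{\mathbb{C}}:\sigma(v)=v\}$. *)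

theory Defs
  imports "HOL-Analysis.Analysis"
begin

definition quadratic_form :: "('v::real_vector \<Rightarrow> real) \<Rightarrow> bool" where
  "quadratic_form Q \<longleftrightarrow>
     (\<exists>B. bilinear B \<and> (\<forall>u w. B u w = B w u) \<and> (\<forall>v. Q v = B v v))"

text \<open>Nondegenerate: the radical of the polar form is trivial.\<close>
definition nondegenerate :: "('v::real_vector \<Rightarrow> real) \<Rightarrow> bool" where
  "nondegenerate Q \<longleftrightarrow> (\<forall>u. (\<forall>w. Q (u + w) = Q u + Q w) \<longrightarrow> u = 0)"

text \<open>A real algebra A with a map iota from V is (a model of) the real Clifford algebra
  Cl(V,Q) with convention v^2 = +Q(v): iota is linear, satisfies the Clifford relation,
  its image generates A as a real algebra, and dim A = 2^(dim V).
  (These properties characterize Cl(V,Q) up to isomorphism.)\<close>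
definition is_clifford_algebra ::
  "('v::euclidean_space \<Rightarrow> real) \<Rightarrow> ('v \<Rightarrow> 'a::real_algebra_1) \<Rightarrow> bool" where
  "is_clifford_algebra Q \<iota> \<longleftrightarrow>
     linear \<iota> \<and>
     (\<forall>v. \<iota> v * \<iota> v = of_real (Q v)) \<and>
     span {prod_list (map \<iota> vs) | vs. True} = (UNIV :: 'a set) \<and>
     dim (UNIV :: 'a set) = 2 ^ DIM('v)"

text \<open>Complexification Cl(V,Q) \<otimes> C, realised as pairs (a,b) = a \<otimes> 1 + b \<otimes> i.\<close>

definition cx_add :: "'a::real_algebra_1 \<times> 'a \<Rightarrow> 'a \<times> 'a \<Rightarrow> 'a \<times> 'a" where
  "cx_add x y = (fst x + fst y, snd x + snd y)"

definition cx_mult :: "'a::real_algebra_1 \<times> 'a \<Rightarrow> 'a \<times> 'a \<Rightarrow> 'a \<times> 'a" where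
  "cx_mult x y = (fst x * fst y - snd x * snd y, fst x * snd y + snd x * fst y)"

definition cx_scale :: "complex \<Rightarrow> 'a::real_algebra_1 \<times> 'a \<Rightarrow> 'a \<times> 'a" where
  "cx_scale z x = (Re z *\<^sub>R fst x - Im z *\<^sub>R snd x, Re z *\<^sub>R snd x + Im z *\<^sub>R fst x)"

definition cx_one :: "'a::real_algebra_1 \<times> 'a" where
  "cx_one = (1, 0)"

definition cx_conj :: "'a::real_algebra_1 \<times> 'a \<Rightarrow> 'a \<times> 'a" where
  "cx_conj x = (fst x, - snd x)"

definition Vreal :: "('v \<Rightarrow> 'a::real_algebra_1) \<Rightarrow> ('a \<times> 'a) set" where
  "Vreal \<iota> = {(\<iota> u, 0) | u. True}"

definition VC :: "('v \<Rightarrow> 'a::real_algebra_1) \<Rightarrow> ('a \<times> 'a) set" where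
  "VC \<iota> = {(\<iota> u, \<iota> w) | u w. True}"

definition real_structure :: "('v \<Rightarrow> 'a::real_algebra_1) \<Rightarrow> ('a \<times> 'a \<Rightarrow> 'a \<times> 'a) \<Rightarrow> bool" where
  "real_structure \<iota> \<sigma> \<longleftrightarrow>
     (\<forall>x y. \<sigma> (cx_add x y) = cx_add (\<sigma> x) (\<sigma> y)) \<and>
     (\<forall>z x. \<sigma> (cx_scale z x) = cx_scale (cnj z) (\<sigma> x)) \<and>
     (\<forall>x y. \<sigma> (cx_mult x y) = cx_mult (\<sigma> x) (\<sigma> y)) \<and>
     \<sigma> cx_one = cx_one \<and>
     bij \<sigma> \<and>
     (\<forall>x. \<sigma> (\<sigma> x) = x) \<and>
     \<sigma> ` VC \<iota> \<subseteq> VC \<iota>"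

definition admissible :: "('a::real_algebra_1 \<times> 'a \<Rightarrow> 'a \<times> 'a) \<Rightarrow> bool" where
  "admissible \<sigma> \<longleftrightarrow> (\<forall>x. \<sigma> (cx_conj x) = cx_conj (\<sigma> x))"

definition Vsigma :: "('v \<Rightarrow> 'a::real_algebra_1) \<Rightarrow> ('a \<times> 'a \<Rightarrow> 'a \<times> 'a) \<Rightarrow> ('a \<times> 'a) set" where
  "Vsigma \<iota> \<sigma> = {x \<in> VC \<iota>. \<sigma> x = x}"

text \<open>V_+ = V \<inter> V_\<sigma> and V_- = V \<inter> i V_\<sigma>, pulled back to V along the (injective) embedding.\<close>
definition Vplus :: "('v \<Rightarrow> 'a::real_algebra_1) \<Rightarrow> ('a \<times> 'a \<Rightarrow> 'a \<times> 'a) \<Rightarrow> 'v set" where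
  "Vplus \<iota> \<sigma> = {u. (\<iota> u, 0) \<in> Vreal \<iota> \<inter> Vsigma \<iota> \<sigma>}"

definition Vminus :: "('v \<Rightarrow> 'a::real_algebra_1) \<Rightarrow> ('a \<times> 'a \<Rightarrow> 'a \<times> 'a) \<Rightarrow> 'v set" where
  "Vminus \<iota> \<sigma> = {u. (\<iota> u, 0) \<in> Vreal \<iota> \<inter> cx_scale \<i> ` Vsigma \<iota> \<sigma>}"

definition Q_orth_decomp :: "('v::real_vector \<Rightarrow> real) \<Rightarrow> 'v set \<Rightarrow> 'v set \<Rightarrow> bool" where
  "Q_orth_decomp Q A B \<longleftrightarrow>
     subspace A \<and> subspace B \<and>
     (\<forall>v. \<exists>a\<in>A. \<exists>b\<in>B. v = a + b) \<and> A \<inter> B = {0} \<and>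
     (\<forall>a\<in>A. \<forall>b\<in>B. Q (a + b) = Q a + Q b)"

end

theory Submission
  imports Defs
begin

text \<open>
  Write \<open>\<sigma>(a,0) = (\<alpha> a, \<beta> a)\<close> on the real part \<open>Cl(V,Q) \<otimes> 1\<close>. Additivity and
  antilinearity give \<open>\<sigma>(a,b) = (\<alpha> a + \<beta> b, \<beta> a - \<alpha> b)\<close>, so \<open>\<sigma>\<close> commutes with \<open>c\<close>
  exactly when \<open>\<beta> = 0\<close>, i.e. when \<open>\<sigma>\<close> preserves the real part; as \<open>\<sigma>\<close> is
  multiplicative and \<open>V\<close> generates \<open>Cl(V,Q)\<close>, this holds iff \<open>\<sigma>(V) \<subseteq> V\<close>. The
  restriction \<open>T\<close> of \<open>\<sigma>\<close> to \<open>V\<close> is then an involution, orthogonal since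
  \<open>T(v)\<^sup>2 = \<sigma>(v\<^sup>2) = Q(v)\<close>, and \<open>V\<^sub>+, V\<^sub>-\<close> are its \<open>\<plusminus>1\<close>-eigenspaces, which are
  \<open>Q\<close>-orthogonal by the parallelogram law; conversely \<open>V = V\<^sub>+ \<oplus> V\<^sub>-\<close> gives
  \<open>\<sigma>(V) \<subseteq> V\<close>. Finally, if \<open>c\<close> preserves \<open>V\<^sub>\<sigma>\<close>, it maps the \<open>\<sigma>\<close>-fixed vectors
  \<open>x + \<sigma>x\<close> and \<open>i(x - \<sigma>x)\<close> into \<open>V\<^sub>\<sigma>\<close>, which forces \<open>c\<sigma> = \<sigma>c\<close> on \<open>V\<^sup>C\<close>.
\<close>

lemma neg_eq_self_iff [simp]: "- x = x \<longleftrightarrow> (x::'a::real_vector) = 0"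
proof
  assume "- x = x"
  then have "(2::real) *\<^sub>R x = 0"
    by (metis scaleR_2 add.right_inverse)
  then show "x = 0" by simp
qed simp

lemma cx_add_eq_plus: "cx_add x y = x + y"
  by (simp add: cx_add_def plus_prod_def)

lemma cx_scale_of_real: "cx_scale (complex_of_real r) x = r *\<^sub>R x"
  by (simp add: cx_scale_def scaleR_prod_def)

lemma cx_scale_minus_i: "cx_scale (- \<i>) x = - cx_scale \<i> x"
  by (simp add: cx_scale_def)

lemma cx_scale_i_pair [simp]: "cx_scale \<i> (a, b) = (- b, a)"
  by (simp add: cx_scale_def)

lemma cx_mult_pair [simp]: "cx_mult (a, b) (c, d) = (a * c - b * d, a * d + b * c)"
  by (simp add: cx_mult_def)

lemma cx_conj_pair [simp]: "cx_conj (a, b) = (a, - b)"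
  by (simp add: cx_conj_def)

lemma cx_conj_eq_self_iff: "cx_conj x = x \<longleftrightarrow> snd x = 0"
  by (cases x) simp

lemma linear_cx_conj: "linear cx_conj"
  by (rule linearI) (auto simp: cx_conj_def)

lemma linear_cx_scale_i: "linear (cx_scale \<i>)"
  by (rule linearI) (auto simp: cx_scale_def)

lemma cx_conj_cx_scale_i: "cx_conj (cx_scale \<i> x) = - cx_scale \<i> (cx_conj x)"
  by (cases x) simp

lemma cx_scale_i_i: "cx_scale \<i> (cx_scale \<i> x) = - x"
  by (cases x) simp

lemma quadratic_form_parallelogram:
  assumes "quadratic_form Q"
  shows "Q (a + b) + Q (a - b) = 2 * (Q a + Q b)"
proof -
  obtain B where B: "bilinear B" and Q: "\<And>v. Q v = B v v"
    using assms unfolding quadratic_form_def by blast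
  show ?thesis
    using B by (simp add: Q bilinear_ladd bilinear_radd bilinear_lsub bilinear_rsub)
qed

lemma Q_orth_decomp_eigenspaces:
  fixes T :: "'v::real_vector \<Rightarrow> 'v"
  assumes Q: "quadratic_form Q" and T: "linear T"
    and invol: "\<And>v. T (T v) = v" and orth: "\<And>v. Q (T v) = Q v"
  shows "Q_orth_decomp Q {u. T u = u} {u. T u = - u}"
  unfolding Q_orth_decomp_def
proof (intro conjI ballI allI)
  show "subspace {u. T u = u}" "subspace {u. T u = - u}"
    using T by (auto simp: subspace_def linear_0 linear_add linear_scale)
  show "{u. T u = u} \<inter> {u. T u = - u} = {0}"
    using T by (auto simp: linear_0)
next
  fix v
  have "T ((1/2) *\<^sub>R (v + T v)) = (1/2) *\<^sub>R (v + T v)"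
    and "T ((1/2) *\<^sub>R (v - T v)) = - ((1/2) *\<^sub>R (v - T v))"
    using T invol by (simp_all add: linear_add linear_diff linear_scale algebra_simps)
  moreover have "v = (1/2) *\<^sub>R (v + T v) + (1/2) *\<^sub>R (v - T v)"
    by (simp add: algebra_simps flip: scaleR_add_left)
  ultimately show "\<exists>a\<in>{u. T u = u}. \<exists>b\<in>{u. T u = - u}. v = a + b"
    by blast
next
  fix a b assume "a \<in> {u. T u = u}" "b \<in> {u. T u = - u}"
  then have "T (a + b) = a - b"
    using T by (simp add: linear_add)
  then have "Q (a + b) = Q (a - b)"
    by (metis orth)
  then show "Q (a + b) = Q a + Q b"
    using quadratic_form_parallelogram[OF Q, of a b] by simp
qed

lemma inj_clifford_embedding:
  assumes \<iota>: "linear \<iota>" and clifford: "\<And>v. \<iota> v * \<iota> v = (of_real (Q v) :: 'a::real_algebra_1)"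
    and "nondegenerate Q"
  shows "inj \<iota>"
proof (rule linear_inj_iff_eq_0[OF \<iota>, THEN iffD2], intro allI impI)
  fix u assume u: "\<iota> u = 0"
  have "Q (u + w) = Q u + Q w" for w
  proof -
    have "Q u = 0"
      using clifford[of u] u by simp
    moreover have "(of_real (Q (u + w)) :: 'a) = of_real (Q w)"
      using \<iota> u by (simp flip: clifford add: linear_add)
    ultimately show ?thesis by simp
  qed
  then show "u = 0"
    using \<open>nondegenerate Q\<close> unfolding nondegenerate_def by blast
qed

locale clifford_real_structure =
  fixes \<iota> :: "'v::real_vector \<Rightarrow> 'a::real_algebra_1" and \<sigma> :: "'a \<times> 'a \<Rightarrow> 'a \<times> 'a"
  assumes real_structure: "real_structure \<iota> \<sigma>" and linear_embedding: "linear \<iota>"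
begin

lemma sigma_add: "\<sigma> (x + y) = \<sigma> x + \<sigma> y"
  using real_structure unfolding real_structure_def cx_add_eq_plus by blast

lemma sigma_cx_scale: "\<sigma> (cx_scale z x) = cx_scale (cnj z) (\<sigma> x)"
  using real_structure unfolding real_structure_def by blast

lemma linear_sigma: "linear \<sigma>"
  by (rule linearI) (simp_all add: sigma_add flip: cx_scale_of_real add: sigma_cx_scale)

lemma sigma_cx_scale_i: "\<sigma> (cx_scale \<i> x) = - cx_scale \<i> (\<sigma> x)"
  by (simp add: sigma_cx_scale cx_scale_minus_i)

lemma sigma_cx_mult: "\<sigma> (cx_mult x y) = cx_mult (\<sigma> x) (\<sigma> y)"
  using real_structure unfolding real_structure_def by blast

lemma sigma_one: "\<sigma> (1, 0) = (1, 0)"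
  using real_structure unfolding real_structure_def cx_one_def by blast

lemma sigma_sigma [simp]: "\<sigma> (\<sigma> x) = x"
  using real_structure unfolding real_structure_def by blast

lemma sigma_VC: "x \<in> VC \<iota> \<Longrightarrow> \<sigma> x \<in> VC \<iota>"
  using real_structure unfolding real_structure_def by blast

lemma embedding_0 [simp]: "\<iota> 0 = 0"
  using linear_embedding by (rule linear_0)

lemma VC_embedding: "(\<iota> u, \<iota> w) \<in> VC \<iota>"
  by (auto simp: VC_def)

lemma subspace_VC: "subspace (VC \<iota>)"
  unfolding subspace_def VC_def
  by (auto simp: linear_add[OF linear_embedding] linear_scale[OF linear_embedding]
        zero_prod_def plus_prod_def scaleR_prod_def
        intro: exI[of _ 0] exI[of _ "_ + _"] exI[of _ "_ *\<^sub>R _"])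

lemma cx_scale_i_VC: "x \<in> VC \<iota> \<Longrightarrow> cx_scale \<i> x \<in> VC \<iota>"
  by (auto simp: VC_def linear_neg[OF linear_embedding, symmetric])

lemma sigma_neg: "\<sigma> (- x) = - \<sigma> x"
  using linear_sigma by (rule linear_neg)

lemma sigma_pair:
  "\<sigma> (a, b) = (fst (\<sigma> (a, 0)) + snd (\<sigma> (b, 0)), snd (\<sigma> (a, 0)) - fst (\<sigma> (b, 0)))"
proof -
  have "(a, b) = (a, 0) + cx_scale \<i> (b, 0)"
    by simp
  then have "\<sigma> (a, b) = \<sigma> (a, 0) - cx_scale \<i> (\<sigma> (b, 0))"
    by (metis sigma_add sigma_cx_scale_i diff_conv_add_uminus)
  then show ?thesis
    by (cases "\<sigma> (a, 0)", cases "\<sigma> (b, 0)") simp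
qed

lemma admissible_iff_real_part: "admissible \<sigma> \<longleftrightarrow> (\<forall>p. snd (\<sigma> (p, 0)) = 0)"
proof
  assume "admissible \<sigma>"
  then have "\<sigma> (cx_conj (p, 0)) = cx_conj (\<sigma> (p, 0))" for p
    unfolding admissible_def by blast
  then have "\<sigma> (p, 0) = cx_conj (\<sigma> (p, 0))" for p
    by simp
  then show "\<forall>p. snd (\<sigma> (p, 0)) = 0"
    by (metis cx_conj_eq_self_iff)
next
  assume real: "\<forall>p. snd (\<sigma> (p, 0)) = 0"
  have "\<sigma> (a, - b) = cx_conj (\<sigma> (a, b))" for a b
  proof -
    have neg: "\<sigma> (- b, 0) = - \<sigma> (b, 0)"
      using sigma_neg[of "(b, 0)"] by simp
    have "\<sigma> (a, - b) = (fst (\<sigma> (a, 0)) + snd (\<sigma> (- b, 0)), snd (\<sigma> (a, 0)) - fst (\<sigma> (- b, 0)))"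
      by (rule sigma_pair)
    also have "\<dots> = cx_conj (fst (\<sigma> (a, 0)) + snd (\<sigma> (b, 0)), snd (\<sigma> (a, 0)) - fst (\<sigma> (b, 0)))"
      using real by (simp add: neg)
    also have "\<dots> = cx_conj (\<sigma> (a, b))"
      by (simp only: sigma_pair[of a b])
    finally show ?thesis .
  qed
  then show "admissible \<sigma>"
    unfolding admissible_def by (metis cx_conj_pair surj_pair)
qed

lemma sigma_V_iff_real_part_on_V:
  "\<sigma> ` Vreal \<iota> \<subseteq> Vreal \<iota> \<longleftrightarrow> (\<forall>u. snd (\<sigma> (\<iota> u, 0)) = 0)"
proof -
  have "\<exists>a b. \<sigma> (\<iota> u, 0) = (\<iota> a, \<iota> b)" for u
    using sigma_VC[OF VC_embedding[of u 0]] unfolding VC_def by simp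
  then show ?thesis
    unfolding Vreal_def by (auto simp: image_subset_iff) (metis snd_conv)+
qed

lemma real_part_of_sigma_V:
  assumes V: "\<sigma> ` Vreal \<iota> \<subseteq> Vreal \<iota>"
    and generated: "span {prod_list (map \<iota> vs) | vs. True} = UNIV"
  shows "snd (\<sigma> (p, 0)) = 0"
proof -
  have sigma_V: "\<exists>a. \<sigma> (\<iota> v, 0) = (\<iota> a, 0)" for v
    using V unfolding Vreal_def by blast
  have linear: "linear (\<lambda>p. snd (\<sigma> (p, 0)))"
    by (rule linearI)
      (simp_all add: sigma_add[of "(_, 0)" "(_, 0)", simplified]
        linear_scale[OF linear_sigma, of _ "(_, 0)", simplified])
  have products: "snd (\<sigma> (prod_list (map \<iota> vs), 0)) = 0" for vs
  proof (induction vs)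
    case Nil
    then show ?case by (simp add: sigma_one)
  next
    case (Cons v vs)
    obtain a where a: "\<sigma> (\<iota> v, 0) = (\<iota> a, 0)"
      using sigma_V by blast
    have "\<sigma> (prod_list (map \<iota> (v # vs)), 0) = cx_mult (\<iota> a, 0) (\<sigma> (prod_list (map \<iota> vs), 0))"
      using sigma_cx_mult[of "(\<iota> v, 0)" "(prod_list (map \<iota> vs), 0)"] by (simp add: a)
    with Cons show ?case
      by (cases "\<sigma> (prod_list (map \<iota> vs), 0)") simp
  qed
  have "p \<in> span {prod_list (map \<iota> vs) | vs. True}"
    unfolding generated by simp
  then show ?thesis
    by (rule linear_eq_0_on_span[OF linear, rotated]) (auto simp: products)
qed

lemma conj_Vsigma_of_admissible:
  assumes "admissible \<sigma>"
  shows "cx_conj ` Vsigma \<iota> \<sigma> \<subseteq> Vsigma \<iota> \<sigma>"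
proof
  fix y assume "y \<in> cx_conj ` Vsigma \<iota> \<sigma>"
  then obtain u w where fixed: "\<sigma> (\<iota> u, \<iota> w) = (\<iota> u, \<iota> w)" and y: "y = cx_conj (\<iota> u, \<iota> w)"
    unfolding Vsigma_def VC_def by blast
  have "\<sigma> y = cx_conj (\<sigma> (\<iota> u, \<iota> w))"
    using assms unfolding admissible_def y by blast
  also have "\<dots> = y"
    unfolding fixed y ..
  finally have "\<sigma> y = y" .
  moreover have "y = (\<iota> u, \<iota> (- w))"
    unfolding y by (simp add: linear_neg[OF linear_embedding])
  ultimately show "y \<in> Vsigma \<iota> \<sigma>"
    unfolding Vsigma_def by (metis (mono_tags) VC_embedding mem_Collect_eq)
qed

lemma sigma_cx_conj_commute_on_VC:
  assumes conj: "cx_conj ` Vsigma \<iota> \<sigma> \<subseteq> Vsigma \<iota> \<sigma>" and x: "x \<in> VC \<iota>"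
  shows "\<sigma> (cx_conj x) = cx_conj (\<sigma> x)"
proof -
  have conj_fixed: "\<sigma> (cx_conj z) = cx_conj z" if "z \<in> VC \<iota>" "\<sigma> z = z" for z
    using conj that unfolding Vsigma_def by blast
  have y: "\<sigma> x \<in> VC \<iota>"
    using x by (rule sigma_VC)
  define d where "d = x - \<sigma> x"
  have "\<sigma> (x + \<sigma> x) = x + \<sigma> x"
    by (simp add: sigma_add add.commute)
  then have plus: "\<sigma> (cx_conj (x + \<sigma> x)) = cx_conj (x + \<sigma> x)"
    using x y by (intro conj_fixed subspace_add[OF subspace_VC])
  have "\<sigma> (cx_scale \<i> d) = cx_scale \<i> d"
    unfolding d_def sigma_cx_scale_i
    by (simp add: linear_diff[OF linear_sigma] linear_diff[OF linear_cx_scale_i])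
  then have "\<sigma> (cx_conj (cx_scale \<i> d)) = cx_conj (cx_scale \<i> d)"
    unfolding d_def using x y
    by (intro conj_fixed cx_scale_i_VC subspace_diff[OF subspace_VC])
  then have "cx_scale \<i> (\<sigma> (cx_conj d)) = cx_scale \<i> (- cx_conj d)"
    by (simp add: cx_conj_cx_scale_i sigma_neg sigma_cx_scale_i linear_neg[OF linear_cx_scale_i])
  then have minus: "\<sigma> (cx_conj d) = - cx_conj d"
    by (metis cx_scale_i_i neg_equal_iff_equal)
  have "2 *\<^sub>R x = (x + \<sigma> x) + d" and "2 *\<^sub>R \<sigma> x = (x + \<sigma> x) - d"
    unfolding d_def by (simp_all add: scaleR_2)
  then have "2 *\<^sub>R \<sigma> (cx_conj x) = 2 *\<^sub>R cx_conj (\<sigma> x)"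
    using plus minus
    by (simp add: linear_scale[OF linear_sigma, symmetric] linear_scale[OF linear_cx_conj, symmetric]
        linear_add[OF linear_cx_conj] linear_diff[OF linear_cx_conj] sigma_add)
  then show ?thesis
    by simp
qed

lemma sigma_V_of_conj_Vsigma:
  assumes "cx_conj ` Vsigma \<iota> \<sigma> \<subseteq> Vsigma \<iota> \<sigma>"
  shows "\<sigma> ` Vreal \<iota> \<subseteq> Vreal \<iota>"
  unfolding sigma_V_iff_real_part_on_V
proof
  fix u
  have "\<sigma> (\<iota> u, 0) = cx_conj (\<sigma> (\<iota> u, 0))"
    using sigma_cx_conj_commute_on_VC[OF assms VC_embedding[of u 0]] by simp
  then show "snd (\<sigma> (\<iota> u, 0)) = 0"
    by (metis cx_conj_eq_self_iff)
qed

lemma Vplus_iff: "u \<in> Vplus \<iota> \<sigma> \<longleftrightarrow> \<sigma> (\<iota> u, 0) = (\<iota> u, 0)"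
  unfolding Vplus_def Vreal_def Vsigma_def using VC_embedding[of u 0] by auto

lemma Vminus_iff: "u \<in> Vminus \<iota> \<sigma> \<longleftrightarrow> \<sigma> (\<iota> u, 0) = (- \<iota> u, 0)"
proof
  assume "u \<in> Vminus \<iota> \<sigma>"
  then obtain y where "y \<in> Vsigma \<iota> \<sigma>" and "(\<iota> u, 0) = cx_scale \<i> y"
    unfolding Vminus_def by blast
  then have "\<sigma> (cx_scale \<i> y) = - cx_scale \<i> y" and "(\<iota> u, 0) = cx_scale \<i> y"
    by (simp_all add: Vsigma_def sigma_cx_scale_i)
  then show "\<sigma> (\<iota> u, 0) = (- \<iota> u, 0)"
    by (metis uminus_Pair minus_zero)
next
  assume minus: "\<sigma> (\<iota> u, 0) = (- \<iota> u, 0)"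
  have "(0, - \<iota> u) \<in> VC \<iota>"
    using VC_embedding[of 0 "- u"] by (simp add: linear_neg[OF linear_embedding])
  moreover have "\<sigma> (0, - \<iota> u) = (0, - \<iota> u)"
  proof -
    have "\<sigma> (0, - \<iota> u) = \<sigma> (- cx_scale \<i> (\<iota> u, 0))"
      by simp
    also have "\<dots> = cx_scale \<i> (\<sigma> (\<iota> u, 0))"
      by (simp only: sigma_neg sigma_cx_scale_i minus_minus)
    finally show ?thesis
      by (simp add: minus)
  qed
  moreover have "(\<iota> u, 0) = cx_scale \<i> (0, - \<iota> u)"
    by simp
  ultimately show "u \<in> Vminus \<iota> \<sigma>"
    unfolding Vminus_def Vreal_def Vsigma_def by blast
qed

lemma orthogonal_symmetry_of_sigma_V:
  assumes V: "\<sigma> ` Vreal \<iota> \<subseteq> Vreal \<iota>" and inj: "inj \<iota>"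
    and clifford: "\<And>v. \<iota> v * \<iota> v = of_real (Q v)"
  obtains T where "linear T" "\<And>v. T (T v) = v" "\<And>v. Q (T v) = Q v"
    "\<And>v. \<sigma> (\<iota> v, 0) = (\<iota> (T v), 0)"
proof
  define T where "T v = (SOME a. \<sigma> (\<iota> v, 0) = (\<iota> a, 0))" for v
  have T: "\<sigma> (\<iota> v, 0) = (\<iota> (T v), 0)" for v
  proof -
    have "\<exists>a. \<sigma> (\<iota> v, 0) = (\<iota> a, 0)"
      using V unfolding Vreal_def by blast
    then show ?thesis
      unfolding T_def by (rule someI_ex)
  qed
  have T_unique: "T v = a" if "\<sigma> (\<iota> v, 0) = (\<iota> a, 0)" for v a
    using that T[of v] inj by (simp add: inj_eq)
  show "\<sigma> (\<iota> v, 0) = (\<iota> (T v), 0)" for v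
    by (rule T)
  show "linear T"
  proof (rule linearI)
    show "T (x + y) = T x + T y" for x y
      using sigma_add[of "(\<iota> x, 0)" "(\<iota> y, 0)"]
      by (intro T_unique) (simp add: T linear_add[OF linear_embedding])
    show "T (c *\<^sub>R x) = c *\<^sub>R T x" for c x
      using linear_scale[OF linear_sigma, of c "(\<iota> x, 0)"]
      by (intro T_unique) (simp add: T linear_scale[OF linear_embedding])
  qed
  show "T (T v) = v" for v
    using T_unique T[of v] sigma_sigma by metis
  show "Q (T v) = Q v" for v
  proof -
    have "(of_real (Q (T v)), 0) = cx_mult (\<sigma> (\<iota> v, 0)) (\<sigma> (\<iota> v, 0))"
      by (simp add: T clifford)
    also have "\<dots> = \<sigma> (cx_mult (\<iota> v, 0) (\<iota> v, 0))"
      by (rule sigma_cx_mult[symmetric])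
    also have "\<dots> = \<sigma> (Q v *\<^sub>R (1, 0))"
      by (simp add: clifford of_real_def)
    also have "\<dots> = (of_real (Q v), 0)"
      by (simp only: linear_scale[OF linear_sigma] sigma_one) (simp add: of_real_def)
    finally show ?thesis
      by simp
  qed
qed

lemma Q_orth_decomp_of_orthogonal_symmetry:
  assumes Q: "quadratic_form Q" and inj: "inj \<iota>"
    and T: "linear T" "\<And>v. T (T v) = v" "\<And>v. Q (T v) = Q v"
    and sigma_T: "\<And>v. \<sigma> (\<iota> v, 0) = (\<iota> (T v), 0)"
  shows "Q_orth_decomp Q (Vplus \<iota> \<sigma>) (Vminus \<iota> \<sigma>)"
proof -
  have "Vplus \<iota> \<sigma> = {u. T u = u}"
    using inj by (auto simp: Vplus_iff sigma_T inj_eq)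
  moreover have "Vminus \<iota> \<sigma> = {u. T u = - u}"
    using inj by (auto simp: Vminus_iff sigma_T inj_eq linear_neg[OF linear_embedding, symmetric])
  ultimately show ?thesis
    using Q_orth_decomp_eigenspaces[OF Q T] by simp
qed

lemma sigma_V_of_Q_orth_decomp:
  assumes "Q_orth_decomp Q (Vplus \<iota> \<sigma>) (Vminus \<iota> \<sigma>)"
  shows "\<sigma> ` Vreal \<iota> \<subseteq> Vreal \<iota>"
proof (clarsimp simp: Vreal_def)
  fix v
  obtain a b where "a \<in> Vplus \<iota> \<sigma>" "b \<in> Vminus \<iota> \<sigma>" "v = a + b"
    using assms unfolding Q_orth_decomp_def by blast
  then have "\<sigma> (\<iota> v, 0) = (\<iota> (a - b), 0)"
    using sigma_add[of "(\<iota> a, 0)" "(\<iota> b, 0)"]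
    by (simp add: Vplus_iff Vminus_iff linear_add[OF linear_embedding] linear_diff[OF linear_embedding])
  then show "\<exists>c. \<sigma> (\<iota> v, 0) = (\<iota> c, 0)"
    by blast
qed

end

theorem lemma1:
  fixes Q :: "'v::euclidean_space \<Rightarrow> real"
    and \<iota> :: "'v \<Rightarrow> 'a::real_algebra_1"
    and \<sigma> :: "'a \<times> 'a \<Rightarrow> 'a \<times> 'a"
  assumes "even DIM('v)"
    and "quadratic_form Q"
    and "nondegenerate Q"
    and "is_clifford_algebra Q \<iota>"
    and "real_structure \<iota> \<sigma>"
  shows "(admissible \<sigma> \<longleftrightarrow> cx_conj ` Vsigma \<iota> \<sigma> \<subseteq> Vsigma \<iota> \<sigma>) \<and>
         (admissible \<sigma> \<longleftrightarrow> \<sigma> ` Vreal \<iota> \<subseteq> Vreal \<iota>) \<and>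
         (admissible \<sigma> \<longleftrightarrow>
            (\<exists>T. linear T \<and> (\<forall>v. T (T v) = v) \<and> (\<forall>v. Q (T v) = Q v) \<and>
                 (\<forall>v. \<sigma> (\<iota> v, 0) = (\<iota> (T v), 0)))) \<and>
         (admissible \<sigma> \<longleftrightarrow> Q_orth_decomp Q (Vplus \<iota> \<sigma>) (Vminus \<iota> \<sigma>))"
proof -
  have linear: "linear \<iota>" and clifford: "\<And>v. \<iota> v * \<iota> v = of_real (Q v)"
    and generated: "span {prod_list (map \<iota> vs) | vs. True} = UNIV"
    using assms(4) unfolding is_clifford_algebra_def by auto
  interpret clifford_real_structure \<iota> \<sigma>
    using assms(5) linear by (rule clifford_real_structure.intro)
  have inj: "inj \<iota>"
    using linear clifford assms(3) by (rule inj_clifford_embedding)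
  have adm_V: "admissible \<sigma> \<longleftrightarrow> \<sigma> ` Vreal \<iota> \<subseteq> Vreal \<iota>"
    using real_part_of_sigma_V[OF _ generated]
    unfolding admissible_iff_real_part sigma_V_iff_real_part_on_V by blast
  moreover have "admissible \<sigma> \<longleftrightarrow> cx_conj ` Vsigma \<iota> \<sigma> \<subseteq> Vsigma \<iota> \<sigma>"
    using conj_Vsigma_of_admissible sigma_V_of_conj_Vsigma adm_V by blast
  moreover have "\<sigma> ` Vreal \<iota> \<subseteq> Vreal \<iota> \<longleftrightarrow>
      (\<exists>T. linear T \<and> (\<forall>v. T (T v) = v) \<and> (\<forall>v. Q (T v) = Q v) \<and>
           (\<forall>v. \<sigma> (\<iota> v, 0) = (\<iota> (T v), 0)))"
    using orthogonal_symmetry_of_sigma_V[OF _ inj clifford] by (auto simp: Vreal_def) metis+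
  moreover have "\<sigma> ` Vreal \<iota> \<subseteq> Vreal \<iota> \<longleftrightarrow> Q_orth_decomp Q (Vplus \<iota> \<sigma>) (Vminus \<iota> \<sigma>)"
    using orthogonal_symmetry_of_sigma_V[OF _ inj clifford]
      Q_orth_decomp_of_orthogonal_symmetry[OF assms(2) inj] sigma_V_of_Q_orth_decomp
    by metis
  ultimately show ?thesis
    by blast
qed

end
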